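(* Let $0\le d<r<\min\{m,n\}$. The map \[\mathrm{mult}_{d,r}:R(\mathcal{UZ}_{n,m,r+1})_d\to R(\mathcal{UZ}_{n,m,r})_{d+1},\qquad f+\mathrm{gr}\,\mathbf{I}(\mathcal{UZ}_{n,m,r+1})\mapsto f\cdot\sum_{i=1}^n\sum_{j=1}^m x_{i,j}+\mathrm{gr}\,\mathbf{I}(\mathcal{UZ}_{n,m,r})\] is a well-defined injective homomorphism of $\mathfrak{S}_n\times\mathfrak{S}_m$-modules, and there is an $\mathfrak{S}_n\times\mathfrak{S}_m$-module isomorphism \[R(\mathcal{UZ}_{n,m,r})_{d+1}/\mathrm{mult}_{d,r}\bigl(R(\mathcal{UZ}_{n,m,r+1})_d\bigr)\cong R(\mathcal{Z}_{n,m,r})_{d+1}.\]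
   Context: Fix positive integers $n,m$. $\mathbb{C}[\mathbf{x}_{n\times m}]$ is the polynomial ring in variables $x_{i,j}$; $\mathfrak{S}_n\times\mathfrak{S}_m$ acts by $(g,h)\cdot x_{i,j}=x_{g(i),h(j)}$. For finite stable $\mathcal{Z}\subseteq\mathrm{Mat}_{n\times m}(\mathbb{C})$, $\mathbf{I}(\mathcal{Z})$ is the vanishing ideal, $\mathrm{gr}\,\mathbf{I}(\mathcal{Z})$ the ideal generated by top-degree homogeneous components of its nonzero elements, and $R(\mathcal{Z})=\mathbb{C}[\mathbf{x}_{n\times m}]/\mathrm{gr}\,\mathbf{I}(\mathcal{Z})$ with degree-$d$ component $R(\mathcal{Z})_d$. $\mathcal{Z}_{n,m,r}$ is the set of $n\times m$ $0/1$ matrices with exactly $r$ ones and at most one $1$ in each row and column (rook placements with $r$ rooks), and $\mathcal{UZ}_{n,m,r}:=\bigsqcup_{r'=r}^{\min\{m,n\}}\mathcal{Z}_{n,m,r'}$ (upper rook placement locus). *)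

theory Defs
  imports "HOL-Library.Poly_Mapping" "HOL-Combinatorics.Permutations" Complex_Main
begin

text \<open>Polynomials in the variables x_(i,j) (0-indexed: i < n, j < m) over the complex
numbers, represented as finitely supported maps from monomials to coefficients;
a monomial is a finitely supported exponent map on variable indices.\<close>

type_synonym mono = "(nat \<times> nat) \<Rightarrow>\<^sub>0 nat"
type_synonym mpoly = "mono \<Rightarrow>\<^sub>0 complex"

definition PR :: "nat \<Rightarrow> nat \<Rightarrow> mpoly set" where
  "PR n m = {p :: mpoly. \<forall>\<mu>\<in>Poly_Mapping.keys p. \<forall>v\<in>Poly_Mapping.keys \<mu>. fst v < n \<and> snd v < m}"

definition Var :: "nat \<times> nat \<Rightarrow> mpoly" where
  "Var v = Poly_Mapping.single (Poly_Mapping.single v 1) 1"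

definition smult :: "complex \<Rightarrow> mpoly \<Rightarrow> mpoly" where
  "smult c p = Poly_Mapping.map (\<lambda>x. c * x) p"

definition mdeg :: "mono \<Rightarrow> nat" where
  "mdeg \<mu> = (\<Sum>v\<in>Poly_Mapping.keys \<mu>. Poly_Mapping.lookup \<mu> v)"

text \<open>Total degree of a nonzero polynomial.\<close>
definition tdeg :: "mpoly \<Rightarrow> nat" where
  "tdeg p = Max (mdeg ` Poly_Mapping.keys p)"

definition hcomp :: "nat \<Rightarrow> mpoly \<Rightarrow> mpoly" where
  "hcomp k p = (\<Sum>\<mu>\<in>{\<mu>\<in>Poly_Mapping.keys p. mdeg \<mu> = k}. Poly_Mapping.single \<mu> (Poly_Mapping.lookup p \<mu>))"

definition topc :: "mpoly \<Rightarrow> mpoly" where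
  "topc p = hcomp (tdeg p) p"

text \<open>Matrices in Mat_(n x m)(C) are represented as functions nat x nat => complex
vanishing outside {..<n} x {..<m}; evaluation of a polynomial at a matrix.\<close>
definition eval :: "mpoly \<Rightarrow> (nat \<times> nat \<Rightarrow> complex) \<Rightarrow> complex" where
  "eval p A = (\<Sum>\<mu>\<in>Poly_Mapping.keys p. Poly_Mapping.lookup p \<mu> * (\<Prod>v\<in>Poly_Mapping.keys \<mu>. A v ^ Poly_Mapping.lookup \<mu> v))"

definition vanI :: "nat \<Rightarrow> nat \<Rightarrow> (nat \<times> nat \<Rightarrow> complex) set \<Rightarrow> mpoly set" where
  "vanI n m Z = {p \<in> PR n m. \<forall>A\<in>Z. eval p A = 0}"

definition ideal_gen :: "nat \<Rightarrow> nat \<Rightarrow> mpoly set \<Rightarrow> mpoly set" where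
  "ideal_gen n m G = {(\<Sum>i<k. q i * g i) | (k::nat) (q::nat \<Rightarrow> mpoly) (g::nat \<Rightarrow> mpoly). \<forall>i<k. q i \<in> PR n m \<and> g i \<in> G}"

definition grI :: "nat \<Rightarrow> nat \<Rightarrow> (nat \<times> nat \<Rightarrow> complex) set \<Rightarrow> mpoly set" where
  "grI n m Z = ideal_gen n m {topc p | p. p \<in> vanI n m Z \<and> p \<noteq> 0}"

text \<open>Homogeneous polynomials of degree d (including 0).  The degree-d component
R(Z)_d of R(Z) is the quotient of Hom n m d by grI n m Z intersected with Hom n m d.\<close>
definition Hom :: "nat \<Rightarrow> nat \<Rightarrow> nat \<Rightarrow> mpoly set" where
  "Hom n m d = {p \<in> PR n m. \<forall>\<mu>\<in>Poly_Mapping.keys p. mdeg \<mu> = d}"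

definition rookZ :: "nat \<Rightarrow> nat \<Rightarrow> nat \<Rightarrow> (nat \<times> nat \<Rightarrow> complex) set" where
  "rookZ n m r = {A. (\<forall>v. A v = 0 \<or> A v = 1)
      \<and> (\<forall>i j. A (i, j) \<noteq> 0 \<longrightarrow> i < n \<and> j < m)
      \<and> card {v. A v = 1} = r
      \<and> (\<forall>i j j'. A (i, j) = 1 \<and> A (i, j') = 1 \<longrightarrow> j = j')
      \<and> (\<forall>i i' j. A (i, j) = 1 \<and> A (i', j) = 1 \<longrightarrow> i = i')}"

definition UZ :: "nat \<Rightarrow> nat \<Rightarrow> nat \<Rightarrow> (nat \<times> nat \<Rightarrow> complex) set" where
  "UZ n m r = (\<Union>r'\<in>{r..min m n}. rookZ n m r')"

definition act_mono :: "(nat \<Rightarrow> nat) \<Rightarrow> (nat \<Rightarrow> nat) \<Rightarrow> mono \<Rightarrow> mono" where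
  "act_mono g h \<mu> = (\<Sum>v\<in>Poly_Mapping.keys \<mu>. Poly_Mapping.single (g (fst v), h (snd v)) (Poly_Mapping.lookup \<mu> v))"

definition act :: "(nat \<Rightarrow> nat) \<Rightarrow> (nat \<Rightarrow> nat) \<Rightarrow> mpoly \<Rightarrow> mpoly" where
  "act g h p = (\<Sum>\<mu>\<in>Poly_Mapping.keys p. Poly_Mapping.single (act_mono g h \<mu>) (Poly_Mapping.lookup p \<mu>))"

definition sumx :: "nat \<Rightarrow> nat \<Rightarrow> mpoly" where
  "sumx n m = (\<Sum>i<n. \<Sum>j<m. Var (i, j))"

end

(*
  On 0/1 matrices every polynomial agrees with a square-free one, and a form f of degree k lies
  in gr I(Z) exactly when it agrees on Z with a polynomial of degree < k. The locus UZ_r is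
  stratified by the number t of rooks, and sumx takes the constant value t on the stratum of
  size t. Averaging over the deletions of one rook shows that a square-free form of degree
  k <= t vanishing on all placements of t rooks also vanishes on placements of t + 1 rooks.
  Hence a square-free form C of degree k <= r is determined on UZ_r by its values on Z_r, and
  a binomial interpolation in t = sumx gives C = B + (sumx - r) Q on UZ_r with deg Q < k.
  Injectivity follows by comparing this with t C = B, and the interpolation itself writes a
  form of gr I(Z_r) as an element of gr I(UZ_r) plus a multiple of sumx.
*)
theory Submission
  imports Defs "HOL-Library.Indicator_Function"
begin

abbreviation keys :: "('a \<Rightarrow>\<^sub>0 'b::zero) \<Rightarrow> 'a set" where
  "keys \<equiv> Poly_Mapping.keys"
abbreviation lookup :: "('a \<Rightarrow>\<^sub>0 'b::zero) \<Rightarrow> 'a \<Rightarrow> 'b" where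
  "lookup \<equiv> Poly_Mapping.lookup"

section \<open>The degree filtration\<close>

definition supported :: "'a set \<Rightarrow> ('a \<Rightarrow>\<^sub>0 'b::zero) set" where
  "supported M = {p. keys p \<subseteq> M}"

lemma supported_zero [simp]: "0 \<in> supported M"
  by (simp add: supported_def)

lemma supported_single: "\<mu> \<in> M \<Longrightarrow> Poly_Mapping.single \<mu> c \<in> supported M"
  by (simp add: supported_def)

lemma supported_add: "p \<in> supported M \<Longrightarrow> q \<in> supported M \<Longrightarrow> p + q \<in> supported M"
  using keys_add[of p q] by (auto simp: supported_def)

lemma supported_uminus: "p \<in> supported M \<Longrightarrow> - p \<in> supported M"
  for p :: "'a \<Rightarrow>\<^sub>0 'b::ab_group_add"
  by (simp add: supported_def)

lemma supported_diff: "p \<in> supported M \<Longrightarrow> q \<in> supported M \<Longrightarrow> p - q \<in> supported M"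
  for p :: "'a \<Rightarrow>\<^sub>0 'b::ab_group_add"
  using supported_add[of p M "- q"] supported_uminus[of q M] by (simp only: diff_conv_add_uminus)

lemma supported_sum: "(\<And>i. i \<in> I \<Longrightarrow> f i \<in> supported M) \<Longrightarrow> sum f I \<in> supported M"
  by (induction I rule: infinite_finite_induct) (auto intro: supported_add)

lemma supported_mono: "p \<in> supported M \<Longrightarrow> M \<subseteq> N \<Longrightarrow> p \<in> supported N"
  by (auto simp: supported_def)

lemma supported_mult:
  fixes p q :: "'a::monoid_add \<Rightarrow>\<^sub>0 'b::semiring_0"
  assumes "p \<in> supported M" "q \<in> supported N" "\<And>\<mu> \<nu>. \<mu> \<in> M \<Longrightarrow> \<nu> \<in> N \<Longrightarrow> \<mu> + \<nu> \<in> K"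
  shows "p * q \<in> supported K"
  using assms keys_mult[of p q] by (fastforce simp: supported_def)

definition cells :: "nat \<Rightarrow> nat \<Rightarrow> (nat \<times> nat) set" where
  "cells n m = {..<n} \<times> {..<m}"

definition cell_monos :: "nat \<Rightarrow> nat \<Rightarrow> mono set" where
  "cell_monos n m = {\<mu>. keys \<mu> \<subseteq> cells n m}"

definition Deg_less :: "nat \<Rightarrow> nat \<Rightarrow> nat \<Rightarrow> mpoly set" where
  "Deg_less n m k = supported {\<mu> \<in> cell_monos n m. mdeg \<mu> < k}"

lemma finite_cells [simp]: "finite (cells n m)"
  by (simp add: cells_def)

lemma PR_eq_supported: "PR n m = supported (cell_monos n m)"
  unfolding PR_def supported_def cell_monos_def cells_def by (force simp: subset_iff mem_Times_iff)

lemma Hom_eq_supported: "Hom n m k = supported {\<mu> \<in> cell_monos n m. mdeg \<mu> = k}"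
  by (auto simp: Hom_def PR_eq_supported supported_def)

lemma mdeg_eq_sum_superset: "finite S \<Longrightarrow> keys \<mu> \<subseteq> S \<Longrightarrow> mdeg \<mu> = (\<Sum>v\<in>S. lookup \<mu> v)"
  unfolding mdeg_def by (rule sum.mono_neutral_left) (auto simp: in_keys_iff)

lemma mdeg_add: "mdeg (\<mu> + \<nu>) = mdeg \<mu> + mdeg \<nu>"
proof -
  let ?S = "keys \<mu> \<union> keys \<nu>"
  have "mdeg (\<mu> + \<nu>) = (\<Sum>v\<in>?S. lookup (\<mu> + \<nu>) v)"
    using keys_add[of \<mu> \<nu>] by (intro mdeg_eq_sum_superset) auto
  also have "\<dots> = (\<Sum>v\<in>?S. lookup \<mu> v) + (\<Sum>v\<in>?S. lookup \<nu> v)"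
    by (simp add: lookup_add sum.distrib)
  also have "\<dots> = mdeg \<mu> + mdeg \<nu>"
    using mdeg_eq_sum_superset[of ?S \<mu>] mdeg_eq_sum_superset[of ?S \<nu>] by simp
  finally show ?thesis .
qed

lemma mdeg_zero [simp]: "mdeg 0 = 0"
  by (simp add: mdeg_def)

lemma card_keys_le_mdeg: "card (keys \<mu>) \<le> mdeg \<mu>"
proof -
  have "card (keys \<mu>) = (\<Sum>v\<in>keys \<mu>. 1)" by simp
  also have "\<dots> \<le> mdeg \<mu>"
    unfolding mdeg_def by (rule sum_mono) (auto simp: in_keys_iff)
  finally show ?thesis .
qed

lemma cell_monos_add: "\<mu> \<in> cell_monos n m \<Longrightarrow> \<nu> \<in> cell_monos n m \<Longrightarrow> \<mu> + \<nu> \<in> cell_monos n m"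
  using keys_add[of \<mu> \<nu>] by (auto simp: cell_monos_def)

lemma zero_in_cell_monos [simp]: "0 \<in> cell_monos n m"
  by (simp add: cell_monos_def)

lemma Hom_diff: "p \<in> Hom n m k \<Longrightarrow> q \<in> Hom n m k \<Longrightarrow> p - q \<in> Hom n m k"
  by (simp add: Hom_eq_supported supported_diff)

lemma Hom_sum: "(\<And>i. i \<in> I \<Longrightarrow> f i \<in> Hom n m k) \<Longrightarrow> sum f I \<in> Hom n m k"
  by (simp add: Hom_eq_supported supported_sum)

lemma Hom_mult: "p \<in> Hom n m a \<Longrightarrow> q \<in> Hom n m b \<Longrightarrow> p * q \<in> Hom n m (a + b)"
  unfolding Hom_eq_supported by (erule supported_mult) (auto simp: cell_monos_add mdeg_add)

lemma Hom_imp_PR: "p \<in> Hom n m k \<Longrightarrow> p \<in> PR n m"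
  by (simp add: Hom_def)

lemma Hom_imp_Deg_less: "p \<in> Hom n m k \<Longrightarrow> k < k' \<Longrightarrow> p \<in> Deg_less n m k'"
  unfolding Hom_eq_supported Deg_less_def by (erule supported_mono) auto

lemma Deg_less_imp_PR: "p \<in> Deg_less n m k \<Longrightarrow> p \<in> PR n m"
  unfolding Deg_less_def PR_eq_supported by (erule supported_mono) auto

lemma Deg_less_mono: "p \<in> Deg_less n m k \<Longrightarrow> k \<le> k' \<Longrightarrow> p \<in> Deg_less n m k'"
  unfolding Deg_less_def by (erule supported_mono) auto

lemma Deg_less_add: "p \<in> Deg_less n m k \<Longrightarrow> q \<in> Deg_less n m k \<Longrightarrow> p + q \<in> Deg_less n m k"
  by (simp add: Deg_less_def supported_add)

lemma Deg_less_uminus: "p \<in> Deg_less n m k \<Longrightarrow> - p \<in> Deg_less n m k"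
  by (simp add: Deg_less_def supported_uminus)

lemma Deg_less_diff: "p \<in> Deg_less n m k \<Longrightarrow> q \<in> Deg_less n m k \<Longrightarrow> p - q \<in> Deg_less n m k"
  by (simp add: Deg_less_def supported_diff)

lemma Deg_less_sum: "(\<And>i. i \<in> I \<Longrightarrow> f i \<in> Deg_less n m k) \<Longrightarrow> sum f I \<in> Deg_less n m k"
  by (simp add: Deg_less_def supported_sum)

lemma Deg_less_zero [simp]: "0 \<in> Deg_less n m k"
  by (simp add: Deg_less_def)

lemma Deg_less_mult:
  "p \<in> Deg_less n m a \<Longrightarrow> q \<in> Deg_less n m (Suc b) \<Longrightarrow> p * q \<in> Deg_less n m (a + b)"
  unfolding Deg_less_def by (erule supported_mult) (auto simp: cell_monos_add mdeg_add)

lemma Hom_mult_Deg_less: "p \<in> Hom n m a \<Longrightarrow> q \<in> Deg_less n m b \<Longrightarrow> p * q \<in> Deg_less n m (a + b)"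
  using Deg_less_mult[of q n m b p a] Hom_imp_Deg_less[of p n m a "Suc a"] by (simp add: mult.commute add.commute)

lemma of_nat_Deg_less: "of_nat c \<in> Deg_less n m (Suc k)"
  unfolding single_of_nat[symmetric] Deg_less_def by (rule supported_single) simp

lemma of_nat_mult_Deg_less: "p \<in> Deg_less n m k \<Longrightarrow> of_nat c * p \<in> Deg_less n m k"
  using Deg_less_mult[of p n m k "of_nat c" 0] of_nat_Deg_less[of c n m 0] by (simp add: mult.commute)

lemma Var_Hom: "v \<in> cells n m \<Longrightarrow> Var v \<in> Hom n m 1"
  unfolding Var_def Hom_eq_supported by (rule supported_single) (simp add: cell_monos_def mdeg_def)

lemma sumx_Hom: "sumx n m \<in> Hom n m 1"
  unfolding sumx_def by (intro Hom_sum Var_Hom) (simp add: cells_def)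

lemma poly_mapping_eq_sum_single: "p = (\<Sum>\<mu>\<in>keys p. Poly_Mapping.single \<mu> (lookup p \<mu>))"
  by (rule poly_mapping_eqI) (auto simp: lookup_sum lookup_single when_def in_keys_iff)

lemma mult_eq_sum_single:
  "p * q = (\<Sum>\<mu>\<in>keys p. \<Sum>\<nu>\<in>keys q. Poly_Mapping.single (\<mu> + \<nu>) (lookup p \<mu> * lookup q \<nu>))"
  for p q :: "'a::comm_monoid_add \<Rightarrow>\<^sub>0 'b::semiring_0"
proof -
  have "p * q = (\<Sum>\<mu>\<in>keys p. Poly_Mapping.single \<mu> (lookup p \<mu>)) * (\<Sum>\<nu>\<in>keys q. Poly_Mapping.single \<nu> (lookup q \<nu>))"
    by (simp flip: poly_mapping_eq_sum_single)
  then show ?thesis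
    by (simp add: sum_product mult_single)
qed

section \<open>Evaluation\<close>

definition mon_eval :: "(nat \<times> nat \<Rightarrow> complex) \<Rightarrow> mono \<Rightarrow> complex" where
  "mon_eval A \<mu> = (\<Prod>v\<in>keys \<mu>. A v ^ lookup \<mu> v)"

lemma eval_eq_sum_mon_eval: "eval p A = (\<Sum>\<mu>\<in>keys p. lookup p \<mu> * mon_eval A \<mu>)"
  by (simp add: eval_def mon_eval_def)

lemma mon_eval_eq_prod_superset:
  "finite S \<Longrightarrow> keys \<mu> \<subseteq> S \<Longrightarrow> mon_eval A \<mu> = (\<Prod>v\<in>S. A v ^ lookup \<mu> v)"
  unfolding mon_eval_def by (rule prod.mono_neutral_left) (auto simp: in_keys_iff)

lemma mon_eval_add: "mon_eval A (\<mu> + \<nu>) = mon_eval A \<mu> * mon_eval A \<nu>"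
proof -
  let ?S = "keys \<mu> \<union> keys \<nu>"
  have "mon_eval A (\<mu> + \<nu>) = (\<Prod>v\<in>?S. A v ^ lookup (\<mu> + \<nu>) v)"
    using keys_add[of \<mu> \<nu>] by (intro mon_eval_eq_prod_superset) auto
  also have "\<dots> = (\<Prod>v\<in>?S. A v ^ lookup \<mu> v) * (\<Prod>v\<in>?S. A v ^ lookup \<nu> v)"
    by (simp add: lookup_add power_add prod.distrib)
  also have "\<dots> = mon_eval A \<mu> * mon_eval A \<nu>"
    using mon_eval_eq_prod_superset[of ?S \<mu> A] mon_eval_eq_prod_superset[of ?S \<nu> A] by simp
  finally show ?thesis .
qed

lemma eval_eq_sum_superset:
  "finite S \<Longrightarrow> keys p \<subseteq> S \<Longrightarrow> eval p A = (\<Sum>\<mu>\<in>S. lookup p \<mu> * mon_eval A \<mu>)"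
  unfolding eval_eq_sum_mon_eval by (rule sum.mono_neutral_left) (auto simp: in_keys_iff)

lemma eval_add: "eval (p + q) A = eval p A + eval q A"
proof -
  let ?S = "keys p \<union> keys q"
  have "eval (p + q) A = (\<Sum>\<mu>\<in>?S. lookup (p + q) \<mu> * mon_eval A \<mu>)"
    using keys_add[of p q] by (intro eval_eq_sum_superset) auto
  also have "\<dots> = (\<Sum>\<mu>\<in>?S. lookup p \<mu> * mon_eval A \<mu>) + (\<Sum>\<mu>\<in>?S. lookup q \<mu> * mon_eval A \<mu>)"
    by (simp add: lookup_add distrib_right sum.distrib)
  also have "\<dots> = eval p A + eval q A"
    using eval_eq_sum_superset[of ?S p A] eval_eq_sum_superset[of ?S q A] by simp
  finally show ?thesis .
qed

lemma eval_zero [simp]: "eval 0 A = 0"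
  by (simp add: eval_def)

lemma eval_uminus: "eval (- p) A = - eval p A"
  using eval_add[of p "- p" A] by (simp add: eq_neg_iff_add_eq_0 add.commute)

lemma eval_diff: "eval (p - q) A = eval p A - eval q A"
  using eval_add[of "p - q" q A] by simp

lemma eval_sum: "eval (sum f I) A = (\<Sum>i\<in>I. eval (f i) A)"
  by (induction I rule: infinite_finite_induct) (auto simp: eval_add)

lemma eval_single: "eval (Poly_Mapping.single \<mu> c) A = c * mon_eval A \<mu>"
  by (cases "c = 0") (auto simp: eval_eq_sum_mon_eval)

lemma eval_mult: "eval (p * q) A = eval p A * eval q A"
proof -
  have "eval (p * q) A = (\<Sum>\<mu>\<in>keys p. \<Sum>\<nu>\<in>keys q. lookup p \<mu> * lookup q \<nu> * (mon_eval A \<mu> * mon_eval A \<nu>))"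
    by (subst mult_eq_sum_single) (simp add: eval_sum eval_single mon_eval_add)
  also have "\<dots> = eval p A * eval q A"
    by (simp add: eval_eq_sum_mon_eval sum_product algebra_simps)
  finally show ?thesis .
qed

lemma eval_of_nat [simp]: "eval (of_nat k) A = of_nat k"
  by (simp flip: single_of_nat add: eval_single mon_eval_def)

lemma eval_one [simp]: "eval 1 A = 1"
  using eval_of_nat[of 1 A] by (simp only: of_nat_1)

lemma eval_prod: "eval (prod f I) A = (\<Prod>i\<in>I. eval (f i) A)"
  by (induction I rule: infinite_finite_induct) (auto simp: eval_mult)

lemma eval_sumx: "eval (sumx n m) A = (\<Sum>v\<in>cells n m. A v)"
  by (simp add: sumx_def cells_def eval_sum eval_single Var_def mon_eval_def sum.cartesian_product)

section \<open>Homogeneous components and the associated graded ideal\<close>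

lemma lookup_hcomp: "lookup (hcomp k p) \<mu> = (if mdeg \<mu> = k then lookup p \<mu> else 0)"
  unfolding hcomp_def lookup_sum lookup_single by (auto simp: when_def in_keys_iff)

lemma hcomp_add: "hcomp k (p + q) = hcomp k p + hcomp k q"
  by (rule poly_mapping_eqI) (simp add: lookup_hcomp lookup_add)

lemma hcomp_zero [simp]: "hcomp k 0 = 0"
  by (simp add: hcomp_def)

lemma hcomp_sum: "hcomp k (sum f I) = (\<Sum>i\<in>I. hcomp k (f i))"
  by (induction I rule: infinite_finite_induct) (auto simp: hcomp_add)

lemma hcomp_Hom: "p \<in> Hom n m j \<Longrightarrow> hcomp k p = (if j = k then p else 0)"
  by (rule poly_mapping_eqI) (auto simp: lookup_hcomp Hom_def in_keys_iff)

lemma hcomp_in_Hom: "p \<in> PR n m \<Longrightarrow> hcomp k p \<in> Hom n m k"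
  unfolding PR_eq_supported Hom_eq_supported supported_def
  by (auto simp: in_keys_iff lookup_hcomp split: if_splits)

lemma diff_hcomp_Deg_less: "p \<in> Deg_less n m (Suc k) \<Longrightarrow> p - hcomp k p \<in> Deg_less n m k"
  unfolding Deg_less_def supported_def
  by (auto simp: in_keys_iff lookup_minus lookup_hcomp less_Suc_eq split: if_splits)

lemma PR_imp_Deg_less_tdeg: "p \<in> PR n m \<Longrightarrow> p \<in> Deg_less n m (Suc (tdeg p))"
  unfolding PR_eq_supported Deg_less_def supported_def tdeg_def
  by (auto simp: less_Suc_eq_le intro: Max_ge)

lemma topc_add_Deg_less:
  assumes f: "f \<in> Hom n m k" "f \<noteq> 0" and g: "g \<in> Deg_less n m k"
  shows "topc (f + g) = f"
proof -
  have kf: "mdeg \<mu> = k" if "\<mu> \<in> keys f" for \<mu>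
    using f that by (auto simp: Hom_def)
  have kg: "mdeg \<mu> < k" if "\<mu> \<in> keys g" for \<mu>
    using g that by (auto simp: Deg_less_def supported_def)
  obtain \<mu>0 where \<mu>0: "\<mu>0 \<in> keys f"
    using f(2) by (metis all_not_in_conv keys_eq_empty)
  moreover have "\<mu>0 \<notin> keys g"
    using kf[OF \<mu>0] kg by force
  ultimately have "\<mu>0 \<in> keys (f + g)"
    by (simp add: in_keys_iff lookup_add)
  moreover have "mdeg \<mu> \<le> k" if "\<mu> \<in> keys (f + g)" for \<mu>
    using that keys_add[of f g] kf kg by (fastforce simp: less_imp_le)
  ultimately have "tdeg (f + g) = k"
    unfolding tdeg_def using kf[OF \<mu>0] by (intro Max_eqI) auto
  moreover have "lookup g \<mu> = 0" if "mdeg \<mu> = k" for \<mu>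
    using kg that by (metis in_keys_iff less_irrefl)
  moreover have "lookup f \<mu> = 0" if "mdeg \<mu> \<noteq> k" for \<mu>
    using kf that by (metis in_keys_iff)
  ultimately show ?thesis
    unfolding topc_def by (intro poly_mapping_eqI) (simp add: lookup_hcomp lookup_add)
qed

lemma hcomp_mult_Hom:
  assumes "q \<in> PR n m" "t \<in> Hom n m e"
  shows "hcomp k (q * t) = (\<Sum>\<mu>\<in>{\<mu>\<in>keys q. mdeg \<mu> + e = k}. Poly_Mapping.single \<mu> (lookup q \<mu>)) * t"
proof -
  have hom: "Poly_Mapping.single \<mu> (lookup q \<mu>) * t \<in> Hom n m (mdeg \<mu> + e)"
    if "\<mu> \<in> keys q" for \<mu>
    using assms that by (intro Hom_mult)
      (auto simp: Hom_eq_supported PR_eq_supported supported_def)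
  have "q * t = (\<Sum>\<mu>\<in>keys q. Poly_Mapping.single \<mu> (lookup q \<mu>) * t)"
    by (simp only: sum_distrib_right[symmetric] poly_mapping_eq_sum_single[symmetric])
  then have "hcomp k (q * t) = (\<Sum>\<mu>\<in>keys q. hcomp k (Poly_Mapping.single \<mu> (lookup q \<mu>) * t))"
    by (simp add: hcomp_sum)
  also have "\<dots> = (\<Sum>\<mu>\<in>keys q. if mdeg \<mu> + e = k then Poly_Mapping.single \<mu> (lookup q \<mu>) * t else 0)"
    by (intro sum.cong refl) (simp add: hcomp_Hom[OF hom])
  finally show ?thesis
    by (simp add: sum_distrib_right sum.inter_filter[symmetric] if_distrib cong: if_cong)
qed
text \<open>Only the part \<open>q'\<close> of \<open>q\<close> of degree \<open>k - tdeg p\<close> contributes, and since \<open>p\<close> vanishes on \<open>Z\<close>,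
  there \<open>q' * topc p = - q' * (p - topc p)\<close>, which has lower degree.\<close>

lemma hcomp_mult_topc_vanishing:
  assumes q: "q \<in> PR n m" and p: "p \<in> vanI n m Z"
  shows "\<exists>G\<in>Deg_less n m k. \<forall>A\<in>Z. eval (hcomp k (q * topc p)) A = eval G A"
proof -
  let ?e = "tdeg p"
  define q' where "q' = (\<Sum>\<mu>\<in>{\<mu>\<in>keys q. mdeg \<mu> + ?e = k}. Poly_Mapping.single \<mu> (lookup q \<mu>))"
  have pPR: "p \<in> PR n m"
    using p by (simp add: vanI_def)
  have top: "topc p \<in> Hom n m ?e"
    unfolding topc_def using pPR by (rule hcomp_in_Hom)
  have low: "p - topc p \<in> Deg_less n m ?e"
    unfolding topc_def by (rule diff_hcomp_Deg_less[OF PR_imp_Deg_less_tdeg[OF pPR]])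
  have "q' \<in> supported {\<mu>\<in>cell_monos n m. mdeg \<mu> + ?e = k}"
    unfolding q'_def using q
    by (intro supported_sum supported_single) (auto simp: PR_eq_supported supported_def)
  then have G: "- (q' * (p - topc p)) \<in> Deg_less n m k"
    using low unfolding Deg_less_def
    by (intro supported_uminus supported_mult) (auto simp: cell_monos_add mdeg_add)
  have "eval (hcomp k (q * topc p)) A = eval (- (q' * (p - topc p))) A" if "A \<in> Z" for A
    using p that hcomp_mult_Hom[OF q top, of k]
    by (simp add: q'_def vanI_def eval_mult eval_uminus eval_diff)
  with G show ?thesis by blast
qed

lemma one_in_PR: "1 \<in> PR n m"
  unfolding single_one[symmetric] PR_eq_supported by (rule supported_single) simp

lemma zero_in_grI: "0 \<in> grI n m Z"
  unfolding grI_def ideal_gen_def by (rule CollectI, rule exI[of _ 0]) auto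

lemma Hom_in_grI_imp_agrees_Deg_less:
  assumes f: "f \<in> Hom n m k" and fI: "f \<in> grI n m Z"
  shows "\<exists>g\<in>Deg_less n m k. \<forall>A\<in>Z. eval f A = eval g A"
proof -
  obtain K q g where fe: "f = (\<Sum>i<(K::nat). q i * g i)"
    and qg: "\<forall>i<K. q i \<in> PR n m \<and> (\<exists>p. g i = topc p \<and> p \<in> vanI n m Z \<and> p \<noteq> 0)"
    using fI unfolding grI_def ideal_gen_def by blast
  have "\<forall>i<K. \<exists>G\<in>Deg_less n m k. \<forall>A\<in>Z. eval (hcomp k (q i * g i)) A = eval G A"
  proof (intro allI impI)
    fix i assume "i < K"
    then obtain p where "q i \<in> PR n m" "g i = topc p" "p \<in> vanI n m Z"
      using qg by blast
    then show "\<exists>G\<in>Deg_less n m k. \<forall>A\<in>Z. eval (hcomp k (q i * g i)) A = eval G A"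
      using hcomp_mult_topc_vanishing by simp
  qed
  then obtain G where G: "\<And>i. i < K \<Longrightarrow> G i \<in> Deg_less n m k"
    "\<And>i A. i < K \<Longrightarrow> A \<in> Z \<Longrightarrow> eval (hcomp k (q i * g i)) A = eval (G i) A"
    by metis
  have "f = (\<Sum>i<K. hcomp k (q i * g i))"
    using hcomp_Hom[OF f, of k] by (simp add: fe hcomp_sum)
  then have "\<forall>A\<in>Z. eval f A = eval (\<Sum>i<K. G i) A"
    using G(2) by (simp add: eval_sum)
  moreover have "(\<Sum>i<K. G i) \<in> Deg_less n m k"
    by (rule Deg_less_sum) (simp add: G(1))
  ultimately show ?thesis
    by blast
qed

lemma Hom_in_grI_if_agrees_Deg_less:
  assumes f: "f \<in> Hom n m k" and g: "g \<in> Deg_less n m k" "\<forall>A\<in>Z. eval f A = eval g A"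
  shows "f \<in> grI n m Z"
proof (cases "f = 0")
  case True
  then show ?thesis by (simp add: zero_in_grI)
next
  case False
  have top: "topc (f - g) = f"
    using topc_add_Deg_less[OF f False Deg_less_uminus[OF g(1)]] by simp
  then have "f - g \<noteq> 0"
    using False by (auto simp: topc_def hcomp_def)
  moreover have "f - g \<in> PR n m"
    using Hom_imp_PR[OF f] Deg_less_imp_PR[OF g(1)] by (simp add: PR_eq_supported supported_diff)
  then have "f - g \<in> vanI n m Z"
    using g(2) by (simp add: vanI_def eval_diff)
  ultimately have "\<exists>p. f = topc p \<and> p \<in> vanI n m Z \<and> p \<noteq> 0"
    using top by metis
  then show ?thesis
    unfolding grI_def ideal_gen_def
    using one_in_PR by (intro CollectI exI[of _ 1] exI[of _ "\<lambda>_. 1"] exI[of _ "\<lambda>_. f"]) auto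
qed

lemma Hom_in_grI_iff:
  "f \<in> Hom n m k \<Longrightarrow> f \<in> grI n m Z \<longleftrightarrow> (\<exists>g\<in>Deg_less n m k. \<forall>A\<in>Z. eval f A = eval g A)"
  using Hom_in_grI_imp_agrees_Deg_less Hom_in_grI_if_agrees_Deg_less by blast

section \<open>Evaluation at 0/1 matrices\<close>

definition subset_sum :: "('a set \<Rightarrow> 'b::comm_monoid_add) \<Rightarrow> 'a set \<Rightarrow> 'b" where
  "subset_sum c X = (\<Sum>S\<in>Pow X. c S)"

text \<open>At a 0/1 matrix every monomial takes the value of the square-free monomial on its support,
  so \<open>p\<close> acts there like the square-free polynomial with coefficients \<open>sqfree_coeff p\<close>.\<close>

definition sqfree_coeff :: "mpoly \<Rightarrow> (nat \<times> nat) set \<Rightarrow> complex" where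
  "sqfree_coeff p S = (\<Sum>\<mu>\<in>{\<mu>\<in>keys p. keys \<mu> = S}. lookup p \<mu>)"

definition sqfree_mono :: "(nat \<times> nat) set \<Rightarrow> mono" where
  "sqfree_mono S = (\<Sum>v\<in>S. Poly_Mapping.single v 1)"

definition sqfree_poly :: "nat \<Rightarrow> nat \<Rightarrow> ((nat \<times> nat) set \<Rightarrow> complex) \<Rightarrow> mpoly" where
  "sqfree_poly n m c = (\<Sum>S\<in>Pow (cells n m). Poly_Mapping.single (sqfree_mono S) (c S))"

lemma sum_Pow_if_subset:
  assumes "finite X" "T \<subseteq> X"
  shows "(\<Sum>S\<in>Pow X. if S \<subseteq> T then f S else 0) = (\<Sum>S\<in>Pow T. f S)"
proof -
  have "(\<Sum>S\<in>Pow X. if S \<subseteq> T then f S else 0) = (\<Sum>S\<in>Pow T. if S \<subseteq> T then f S else 0)"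
    using assms by (intro sum.mono_neutral_right) auto
  then show ?thesis
    by simp
qed

lemma subset_sum_add: "subset_sum (\<lambda>S. c S + d S) X = subset_sum c X + subset_sum d X"
  by (simp add: subset_sum_def sum.distrib)

lemma subset_sum_diff: "subset_sum (\<lambda>S. c S - d S) X = subset_sum c X - subset_sum d X"
  for c :: "'a set \<Rightarrow> 'b::ab_group_add"
  by (simp add: subset_sum_def sum_subtractf)

lemma subset_sum_mult: "subset_sum (\<lambda>S. a * c S) X = a * subset_sum c X"
  for c :: "'a set \<Rightarrow> 'b::semiring_0"
  by (simp add: subset_sum_def sum_distrib_left)

lemma mon_eval_indicator: "mon_eval (indicator X) \<mu> = (if keys \<mu> \<subseteq> X then 1 else 0)"
proof (cases "keys \<mu> \<subseteq> X")
  case True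
  then have "\<forall>v\<in>keys \<mu>. indicator X v ^ lookup \<mu> v = (1::complex)"
    by auto
  then show ?thesis
    using True by (simp add: mon_eval_def prod.neutral)
next
  case False
  then obtain v where v: "v \<in> keys \<mu>" "v \<notin> X"
    by blast
  then have "mon_eval (indicator X) \<mu> = 0"
    unfolding mon_eval_def by (intro prod_zero bexI[OF _ v(1)]) (simp_all add: in_keys_iff)
  then show ?thesis
    using False by simp
qed

lemma eval_indicator:
  assumes "finite X"
  shows "eval p (indicator X) = subset_sum (sqfree_coeff p) X"
proof -
  have "eval p (indicator X) = (\<Sum>\<mu>\<in>{\<mu>\<in>keys p. keys \<mu> \<subseteq> X}. lookup p \<mu>)"
    by (simp add: eval_eq_sum_mon_eval mon_eval_indicator sum.inter_filter if_distrib cong: if_cong)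
  also have "\<dots> = (\<Sum>S\<in>Pow X. \<Sum>\<mu>\<in>{\<mu>\<in>{\<mu>\<in>keys p. keys \<mu> \<subseteq> X}. keys \<mu> = S}. lookup p \<mu>)"
    using assms by (intro sum.group[symmetric]) auto
  also have "\<dots> = subset_sum (sqfree_coeff p) X"
    unfolding subset_sum_def sqfree_coeff_def by (intro sum.cong refl arg_cong2[where f = sum]) auto
  finally show ?thesis .
qed

lemma sqfree_coeff_eq_0:
  assumes "p \<in> Deg_less n m (Suc k)" "k < card S"
  shows "sqfree_coeff p S = 0"
proof -
  have "keys \<mu> \<noteq> S" if "\<mu> \<in> keys p" for \<mu>
  proof -
    have "mdeg \<mu> < Suc k"
      using assms(1) that by (auto simp: Deg_less_def supported_def)
    then show ?thesis
      using assms(2) card_keys_le_mdeg[of \<mu>] by auto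
  qed
  then have "{\<mu>\<in>keys p. keys \<mu> = S} = {}"
    by blast
  then show ?thesis
    unfolding sqfree_coeff_def by (simp only: sum.empty)
qed

lemma lookup_sqfree_mono: "finite S \<Longrightarrow> lookup (sqfree_mono S) v = (if v \<in> S then 1 else 0)"
  unfolding sqfree_mono_def lookup_sum lookup_single by (auto simp: when_def)

lemma keys_sqfree_mono: "finite S \<Longrightarrow> keys (sqfree_mono S) = S"
  by (auto simp: in_keys_iff lookup_sqfree_mono split: if_splits)

lemma mdeg_sqfree_mono: "finite S \<Longrightarrow> mdeg (sqfree_mono S) = card S"
  by (simp add: mdeg_def keys_sqfree_mono lookup_sqfree_mono)

lemma sqfree_mono_Hom:
  "S \<subseteq> cells n m \<Longrightarrow> Poly_Mapping.single (sqfree_mono S) a \<in> Hom n m (card S)"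
  using finite_subset[OF _ finite_cells]
  by (auto simp: Hom_eq_supported cell_monos_def keys_sqfree_mono mdeg_sqfree_mono intro!: supported_single)

lemma eval_sqfree_mono:
  "finite S \<Longrightarrow> eval (Poly_Mapping.single (sqfree_mono S) a) (indicator X) = (if S \<subseteq> X then a else 0)"
  by (simp add: eval_single mon_eval_indicator keys_sqfree_mono)

lemma eval_sqfree_combination:
  assumes "X \<subseteq> cells n m"
  shows "eval (\<Sum>S\<in>Pow (cells n m). Poly_Mapping.single (sqfree_mono S) (a S) * P S) (indicator X)
    = (\<Sum>S\<in>Pow X. a S * eval (P S) (indicator X))"
proof -
  have "eval (\<Sum>S\<in>Pow (cells n m). Poly_Mapping.single (sqfree_mono S) (a S) * P S) (indicator X)
      = (\<Sum>S\<in>Pow (cells n m). if S \<subseteq> X then a S * eval (P S) (indicator X) else 0)"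
    unfolding eval_sum eval_mult by (intro sum.cong refl) (auto simp: eval_sqfree_mono finite_subset)
  also have "\<dots> = (\<Sum>S\<in>Pow X. a S * eval (P S) (indicator X))"
    using assms by (simp add: sum_Pow_if_subset)
  finally show ?thesis .
qed

lemma eval_sqfree_poly: "X \<subseteq> cells n m \<Longrightarrow> eval (sqfree_poly n m c) (indicator X) = subset_sum c X"
  using eval_sqfree_combination[of X n m c "\<lambda>_. 1"] by (simp add: sqfree_poly_def subset_sum_def)

lemma sqfree_poly_Deg_less:
  assumes "\<And>S. k \<le> card S \<Longrightarrow> c S = 0"
  shows "sqfree_poly n m c \<in> Deg_less n m k"
  unfolding sqfree_poly_def
proof (intro Deg_less_sum)
  fix S assume "S \<in> Pow (cells n m)"
  then show "Poly_Mapping.single (sqfree_mono S) (c S) \<in> Deg_less n m k"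
    using assms[of S] sqfree_mono_Hom[of S n m "c S"]
    by (cases "card S < k") (auto intro: Hom_imp_Deg_less)
qed

text \<open>The lower-degree part collects the monomials that are not square-free.\<close>

lemma Hom_sqfree_decomposition:
  assumes f: "f \<in> Hom n m k"
  obtains c fl where "\<And>S. card S \<noteq> k \<Longrightarrow> c S = 0" "fl \<in> Deg_less n m k"
    "\<And>X. X \<subseteq> cells n m \<Longrightarrow> eval f (indicator X) = subset_sum c X + eval fl (indicator X)"
proof
  let ?c = "sqfree_coeff f"
  define fl where "fl = sqfree_poly n m (\<lambda>S. if card S < k then ?c S else 0)"
  show "(if card S = k then ?c S else 0) = 0" if "card S \<noteq> k" for S
    using that by simp
  show "fl \<in> Deg_less n m k"
    unfolding fl_def by (rule sqfree_poly_Deg_less) simp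
  fix X assume X: "X \<subseteq> cells n m"
  have "?c S = (if card S = k then ?c S else 0) + (if card S < k then ?c S else 0)" for S
    using sqfree_coeff_eq_0[OF Hom_imp_Deg_less[OF f lessI], of S] by auto
  then have "subset_sum ?c X = subset_sum (\<lambda>S. if card S = k then ?c S else 0) X
      + subset_sum (\<lambda>S. if card S < k then ?c S else 0) X"
    by (subst subset_sum_add[symmetric]) simp
  moreover have "eval f (indicator X) = subset_sum ?c X"
    using finite_subset[OF X finite_cells] by (rule eval_indicator)
  moreover have "eval fl (indicator X) = subset_sum (\<lambda>S. if card S < k then ?c S else 0) X"
    unfolding fl_def using X by (rule eval_sqfree_poly)
  ultimately show "eval f (indicator X) = subset_sum (\<lambda>S. if card S = k then ?c S else 0) X + eval fl (indicator X)"
    by (simp only:)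
qed

section \<open>Rook placements\<close>

definition rook_sets :: "nat \<Rightarrow> nat \<Rightarrow> nat \<Rightarrow> (nat \<times> nat) set set" where
  "rook_sets n m t = {X. X \<subseteq> cells n m \<and> card X = t
      \<and> (\<forall>i j j'. (i, j) \<in> X \<and> (i, j') \<in> X \<longrightarrow> j = j')
      \<and> (\<forall>i i' j. (i, j) \<in> X \<and> (i', j) \<in> X \<longrightarrow> i = i')}"

lemma rookZ_eq_indicator_image: "rookZ n m t = indicator ` rook_sets n m t"
proof
  show "rookZ n m t \<subseteq> indicator ` rook_sets n m t"
  proof
    fix A assume A: "A \<in> rookZ n m t"
    have bound: "\<forall>i j. A (i, j) \<noteq> 0 \<longrightarrow> i < n \<and> j < m"
      using A by (simp add: rookZ_def)
    have "(i, j) \<in> cells n m" if "A (i, j) = 1" for i j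
      using bound[rule_format, of i j] that by (simp add: cells_def)
    then have "{v. A v = 1} \<subseteq> cells n m"
      by auto
    then have "{v. A v = 1} \<in> rook_sets n m t"
      using A by (simp add: rookZ_def rook_sets_def)
    moreover have "A = indicator {v. A v = 1}"
      using A by (auto simp: rookZ_def fun_eq_iff indicator_def)
    ultimately show "A \<in> indicator ` rook_sets n m t"
      by blast
  qed
  show "indicator ` rook_sets n m t \<subseteq> rookZ n m t"
    by (auto simp: rookZ_def rook_sets_def cells_def indicator_def subset_iff; blast)
qed

lemma UZ_eq_indicator_image: "UZ n m r = (\<Union>t\<in>{r..min m n}. indicator ` rook_sets n m t)"
  by (simp add: UZ_def rookZ_eq_indicator_image)

lemma rook_sets_subset_cells: "X \<in> rook_sets n m t \<Longrightarrow> X \<subseteq> cells n m"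
  by (simp add: rook_sets_def)

lemma rook_sets_finite: "X \<in> rook_sets n m t \<Longrightarrow> finite X"
  using finite_subset[OF rook_sets_subset_cells finite_cells] .

lemma rook_sets_card: "X \<in> rook_sets n m t \<Longrightarrow> card X = t"
  by (simp add: rook_sets_def)

lemma rook_sets_remove:
  assumes "X \<in> rook_sets n m (Suc t)" "v \<in> X"
  shows "X - {v} \<in> rook_sets n m t"
proof -
  have "finite X" "card X = Suc t"
    using assms(1) by (auto intro: rook_sets_finite rook_sets_card)
  then show ?thesis
    using assms by (simp add: rook_sets_def) blast
qed

lemma eval_sumx_indicator: "X \<subseteq> cells n m \<Longrightarrow> eval (sumx n m) (indicator X) = of_nat (card X)"
  by (simp add: eval_sumx sum.If_cases Int_absorb1 indicator_def)

lemma sum_subset_sum_remove: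
  fixes c :: "'a set \<Rightarrow> 'b::comm_semiring_1"
  assumes Y: "finite Y" and c: "\<And>S. card S \<noteq> k \<Longrightarrow> c S = 0"
  shows "(\<Sum>v\<in>Y. subset_sum c (Y - {v})) = of_nat (card Y - k) * subset_sum c Y"
proof -
  have "(\<Sum>v\<in>Y. subset_sum c (Y - {v})) = (\<Sum>v\<in>Y. \<Sum>S\<in>Pow Y. if v \<notin> S then c S else 0)"
  proof (intro sum.cong refl)
    fix v
    have "Pow (Y - {v}) = {S\<in>Pow Y. v \<notin> S}"
      by auto
    then show "subset_sum c (Y - {v}) = (\<Sum>S\<in>Pow Y. if v \<notin> S then c S else 0)"
      unfolding subset_sum_def using Y by (simp only:) (rule sum.inter_filter, simp)
  qed
  also have "\<dots> = (\<Sum>S\<in>Pow Y. \<Sum>v\<in>Y. if v \<notin> S then c S else 0)"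
    by (rule sum.swap)
  also have "\<dots> = (\<Sum>S\<in>Pow Y. of_nat (card Y - k) * c S)"
  proof (intro sum.cong refl)
    fix S assume S: "S \<in> Pow Y"
    have "(\<Sum>v\<in>Y. if v \<notin> S then c S else 0) = of_nat (card (Y - S)) * c S"
      using Y by (simp add: sum.If_cases Diff_eq Collect_neg_eq)
    also have "\<dots> = of_nat (card Y - k) * c S"
      using S Y c[of S] by (cases "card S = k") (auto simp: card_Diff_subset finite_subset)
    finally show "(\<Sum>v\<in>Y. if v \<notin> S then c S else 0) = of_nat (card Y - k) * c S" .
  qed
  finally show ?thesis
    by (simp add: subset_sum_def sum_distrib_left)
qed

text \<open>Deleting each element of a set of size \<open>t + 1\<close> in turn counts every \<open>k\<close>-subset
  \<open>t + 1 - k\<close> times, so a form vanishing on all deletions vanishes on the set itself.\<close>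

lemma subset_sum_eq_0_if_deletions:
  fixes c :: "'a set \<Rightarrow> 'b::field_char_0"
  assumes "finite Y" "card Y = Suc t" "k \<le> t" "\<And>S. card S \<noteq> k \<Longrightarrow> c S = 0"
    and "\<And>v. v \<in> Y \<Longrightarrow> subset_sum c (Y - {v}) = 0"
  shows "subset_sum c Y = 0"
proof -
  have "(\<Sum>v\<in>Y. subset_sum c (Y - {v})) = of_nat (card Y - k) * subset_sum c Y"
    using assms(1) by (rule sum_subset_sum_remove) (rule assms(4))
  moreover have "(\<Sum>v\<in>Y. subset_sum c (Y - {v})) = 0"
    using assms(5) by simp
  moreover have "(of_nat (card Y - k) :: 'b) \<noteq> 0"
    unfolding of_nat_eq_0_iff using assms(2,3) by simp
  ultimately show ?thesis
    by simp
qed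

lemma rook_sets_subset_sum_eq_0:
  fixes c :: "(nat \<times> nat) set \<Rightarrow> 'a::field_char_0"
  assumes c: "\<And>S. card S \<noteq> k \<Longrightarrow> c S = 0" and "k \<le> r"
    and r: "\<And>X. X \<in> rook_sets n m r \<Longrightarrow> subset_sum c X = 0"
    and "r \<le> t" "X \<in> rook_sets n m t"
  shows "subset_sum c X = 0"
  using assms(4,5)
proof (induction t arbitrary: X rule: dec_induct)
  case base
  then show ?case by (rule r)
next
  case (step t)
  have fin: "finite X" and card: "card X = Suc t"
    using step.prems by (auto intro: rook_sets_finite rook_sets_card)
  have kt: "k \<le> t"
    using step.hyps \<open>k \<le> r\<close> by simp
  have del: "subset_sum c (X - {v}) = 0" if "v \<in> X" for v
    using step.IH rook_sets_remove step.prems that by blast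
  show ?case
    by (rule subset_sum_eq_0_if_deletions[OF fin card kt c del])
qed

section \<open>Interpolation along the rook placement loci\<close>

lemma card_supersets:
  assumes X: "finite X" and S: "S \<subseteq> X" "card S \<le> k"
  shows "card {T. S \<subseteq> T \<and> T \<subseteq> X \<and> card T = k} = (card X - card S) choose (k - card S)"
proof -
  have fin: "finite T" if "T \<subseteq> X" for T
    using X that by (rule finite_subset[rotated])
  have card_Un: "card (U \<union> S) = k" if "U \<subseteq> X - S" "card U = k - card S" for U
  proof -
    have "card (U \<union> S) = card U + card S"
      using that S fin by (intro card_Un_disjoint) auto
    then show ?thesis
      using that S by simp
  qed
  have "bij_betw (\<lambda>T. T - S) {T. S \<subseteq> T \<and> T \<subseteq> X \<and> card T = k} {U. U \<subseteq> X - S \<and> card U = k - card S}"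
    by (rule bij_betw_byWitness[where f' = "\<lambda>U. U \<union> S"])
      (use S fin card_Un in \<open>auto simp: card_Diff_subset\<close>)
  then have "card {T. S \<subseteq> T \<and> T \<subseteq> X \<and> card T = k} = card {U. U \<subseteq> X - S \<and> card U = k - card S}"
    by (rule bij_betw_same_card)
  also have "\<dots> = (card X - card S) choose (k - card S)"
    using X S fin by (simp add: n_subsets card_Diff_subset)
  finally show ?thesis .
qed

lemma subset_sum_layer:
  fixes w :: "'a set \<Rightarrow> 'b::comm_semiring_1"
  assumes X: "finite X"
  shows "subset_sum (\<lambda>T. if card T = k then subset_sum w T else 0) X
    = (\<Sum>S\<in>Pow X. of_nat (card {T. S \<subseteq> T \<and> T \<subseteq> X \<and> card T = k}) * w S)"
proof -
  have "subset_sum (\<lambda>T. if card T = k then subset_sum w T else 0) X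
      = (\<Sum>T\<in>Pow X. \<Sum>S\<in>Pow X. if card T = k \<and> S \<subseteq> T then w S else 0)"
    unfolding subset_sum_def
  proof (intro sum.cong refl)
    fix T assume "T \<in> Pow X"
    then show "(if card T = k then sum w (Pow T) else 0) = (\<Sum>S\<in>Pow X. if card T = k \<and> S \<subseteq> T then w S else 0)"
      using X by (simp add: sum_Pow_if_subset)
  qed
  also have "\<dots> = (\<Sum>S\<in>Pow X. \<Sum>T\<in>Pow X. if card T = k \<and> S \<subseteq> T then w S else 0)"
    by (rule sum.swap)
  also have "\<dots> = (\<Sum>S\<in>Pow X. of_nat (card {T. S \<subseteq> T \<and> T \<subseteq> X \<and> card T = k}) * w S)"
  proof (intro sum.cong refl)
    fix S
    have "{T\<in>Pow X. card T = k \<and> S \<subseteq> T} = {T. S \<subseteq> T \<and> T \<subseteq> X \<and> card T = k}"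
      by auto
    then show "(\<Sum>T\<in>Pow X. if card T = k \<and> S \<subseteq> T then w S else 0)
        = of_nat (card {T. S \<subseteq> T \<and> T \<subseteq> X \<and> card T = k}) * w S"
      using X by (simp add: sum.inter_filter[symmetric])
  qed
  finally show ?thesis .
qed

lemma subset_sum_binomial_layer:
  fixes w :: "'a set \<Rightarrow> 'b::comm_semiring_1"
  assumes "finite X" "\<And>S. k < card S \<Longrightarrow> w S = 0"
  shows "subset_sum (\<lambda>T. if card T = k then subset_sum w T else 0) X
    = (\<Sum>S\<in>Pow X. of_nat (card X - card S choose (k - card S)) * w S)"
  unfolding subset_sum_layer[OF assms(1)]
proof (intro sum.cong refl)
  fix S assume "S \<in> Pow X"
  then show "of_nat (card {T. S \<subseteq> T \<and> T \<subseteq> X \<and> card T = k}) * w S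
      = of_nat (card X - card S choose (k - card S)) * w S"
    using assms card_supersets[of X S k] by (cases "k < card S") auto
qed

text \<open>The form \<open>l T = (\<Sum>S\<subseteq>T. b S / ((r - |S|) choose (k - |S|)))\<close> on \<open>k\<close>-sets has the same subset
  sums as \<open>b\<close> on \<open>r\<close>-sets, so \<open>c - l\<close> vanishes on all larger rook placements.\<close>

lemma rook_sets_subset_sum_extension:
  fixes b c :: "(nat \<times> nat) set \<Rightarrow> 'a::field_char_0"
  assumes kr: "k \<le> r" and c: "\<And>S. card S \<noteq> k \<Longrightarrow> c S = 0" and b: "\<And>S. k < card S \<Longrightarrow> b S = 0"
    and cb: "\<And>X. X \<in> rook_sets n m r \<Longrightarrow> subset_sum c X = subset_sum b X"
    and "r \<le> t" and X: "X \<in> rook_sets n m t"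
  shows "subset_sum c X = (\<Sum>S\<in>Pow X.
    of_nat (t - card S choose (k - card S)) * (b S / of_nat (r - card S choose (k - card S))))"
proof -
  define w where "w S = b S / of_nat (r - card S choose (k - card S))" for S
  define l where "l T = (if card T = k then subset_sum w T else 0)" for T
  have l: "subset_sum l Y = (\<Sum>S\<in>Pow Y. of_nat (card Y - card S choose (k - card S)) * w S)"
    if "finite Y" for Y
    unfolding l_def using that by (rule subset_sum_binomial_layer) (simp add: w_def b)
  have vanish_r: "subset_sum (\<lambda>S. c S - l S) Y = 0" if Y: "Y \<in> rook_sets n m r" for Y
  proof -
    have "of_nat (r - card S choose (k - card S)) * w S = b S" for S
      using kr b[of S] by (cases "k < card S") (auto simp: w_def)
    then have "subset_sum l Y = subset_sum b Y"
      using l[OF rook_sets_finite[OF Y]] rook_sets_card[OF Y] by (simp add: subset_sum_def)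
    then show ?thesis
      by (simp add: subset_sum_diff cb[OF Y])
  qed
  have "c S - l S = 0" if "card S \<noteq> k" for S
    using that by (simp add: c l_def)
  then have "subset_sum (\<lambda>S. c S - l S) X = 0"
    using kr vanish_r \<open>r \<le> t\<close> X by (rule rook_sets_subset_sum_eq_0)
  then show ?thesis
    using l[OF rook_sets_finite[OF X]] rook_sets_card[OF X] by (simp add: subset_sum_diff w_def)
qed

lemma Deg_less_1_prod: "(\<And>i. i \<in> I \<Longrightarrow> f i \<in> Deg_less n m 1) \<Longrightarrow> prod f I \<in> Deg_less n m 1"
proof (induction I rule: infinite_finite_induct)
  case (insert i I)
  then show ?case
    using Deg_less_mult[of "f i" n m 1 "prod f I" 0] by simp
qed (use of_nat_Deg_less[of 1 n m 0] in simp_all)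

lemma prod_diff_eq_prod_diff_plus:
  fixes s c :: mpoly and a :: "nat \<Rightarrow> mpoly"
  assumes s: "s \<in> Deg_less n m 2" and c: "c \<in> Deg_less n m 1" and a: "\<And>i. a i \<in> Deg_less n m 1"
  shows "\<exists>G\<in>Deg_less n m e. (\<Prod>i<e. s - a i) = (\<Prod>i<e. c - a i) + (s - c) * G"
proof (induction e)
  case 0
  show ?case by (intro bexI[of _ 0]) simp_all
next
  case (Suc e)
  then obtain G where G: "G \<in> Deg_less n m e" "(\<Prod>i<e. s - a i) = (\<Prod>i<e. c - a i) + (s - c) * G"
    by blast
  let ?P = "\<Prod>i<e. c - a i"
  have "?P \<in> Deg_less n m (Suc e)"
    using c a by (intro Deg_less_mono[OF Deg_less_1_prod] Deg_less_diff) auto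
  moreover have "s - a e \<in> Deg_less n m (Suc 1)"
    using s a[of e] by (intro Deg_less_diff) (auto intro: Deg_less_mono)
  then have "G * (s - a e) \<in> Deg_less n m (Suc e)"
    using Deg_less_mult[OF G(1)] by fastforce
  ultimately have deg: "?P + G * (s - a e) \<in> Deg_less n m (Suc e)"
    by (rule Deg_less_add)
  have "(\<Prod>i<Suc e. s - a i) = (?P + (s - c) * G) * (s - a e)"
    using G(2) by simp
  also have "\<dots> = (\<Prod>i<Suc e. c - a i) + (s - c) * (?P + G * (s - a e))"
    by (simp add: algebra_simps)
  finally show ?case
    using deg by blast
qed

lemma fact_mult_binomial: "(fact e * of_nat (N choose e) :: 'a::field_char_0) = (\<Prod>i<e. of_nat N - of_nat i)"
  by (simp add: binomial_gbinomial gbinomial_mult_fact atLeast0LessThan)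

text \<open>As a function of \<open>t = card X\<close>, the binomial coefficient \<open>(t - j) choose e\<close> is a polynomial of
  degree \<open>e\<close>, so its difference from the value at \<open>t = r\<close> is \<open>t - r\<close> times a polynomial of
  degree \<open>< e\<close>, which is realized by a polynomial in \<open>sumx\<close>.\<close>

lemma binomial_interpolation:
  obtains G where "\<And>j. G j \<in> Deg_less n m (k - j)"
    "\<And>j X. j \<le> r \<Longrightarrow> X \<subseteq> cells n m \<Longrightarrow> j \<le> card X \<Longrightarrow>
      fact (k - j) * of_nat (card X - j choose (k - j))
        = fact (k - j) * of_nat (r - j choose (k - j)) + (of_nat (card X) - of_nat r) * eval (G j) (indicator X)"
proof -
  have s: "sumx n m \<in> Deg_less n m 2"
    using Hom_imp_Deg_less[OF sumx_Hom] by simp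
  have const: "(of_nat a :: mpoly) \<in> Deg_less n m 1" for a
    using of_nat_Deg_less[where k = 0] by simp
  have "\<exists>G\<in>Deg_less n m (k - j). (\<Prod>i<k - j. sumx n m - of_nat (j + i))
      = (\<Prod>i<k - j. of_nat r - of_nat (j + i)) + (sumx n m - of_nat r) * G" for j
    using prod_diff_eq_prod_diff_plus[OF s const const] by blast
  then obtain G where G: "\<And>j. G j \<in> Deg_less n m (k - j)"
    "\<And>j. (\<Prod>i<k - j. sumx n m - of_nat (j + i))
      = (\<Prod>i<k - j. of_nat r - of_nat (j + i)) + (sumx n m - of_nat r) * G j"
    by metis
  show thesis
  proof (rule that[OF G(1)])
    fix j X assume jX: "j \<le> r" "X \<subseteq> cells n m" "j \<le> card X"
    have "(\<Prod>i<k - j. of_nat (card X) - of_nat (j + i)) =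
        (\<Prod>i<k - j. of_nat r - of_nat (j + i)) + (of_nat (card X) - of_nat r) * eval (G j) (indicator X)"
      using arg_cong[OF G(2), of "\<lambda>p. eval p (indicator X)"] jX(2)
      by (simp add: eval_prod eval_diff eval_add eval_mult eval_sumx_indicator)
    then show "fact (k - j) * of_nat (card X - j choose (k - j))
        = fact (k - j) * of_nat (r - j choose (k - j)) + (of_nat (card X) - of_nat r) * eval (G j) (indicator X)"
      using jX by (simp add: fact_mult_binomial of_nat_diff algebra_simps)
  qed
qed

lemma sqfree_combination_Deg_less:
  assumes "\<And>j. G j \<in> Deg_less n m (k - j)" and "\<And>S. k < card S \<Longrightarrow> a S = 0"
  shows "(\<Sum>S\<in>Pow (cells n m). Poly_Mapping.single (sqfree_mono S) (a S) * G (card S)) \<in> Deg_less n m k"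
proof (intro Deg_less_sum)
  fix S assume "S \<in> Pow (cells n m)"
  then have "Poly_Mapping.single (sqfree_mono S) (a S) * G (card S) \<in> Deg_less n m (card S + (k - card S))"
    by (intro Hom_mult_Deg_less sqfree_mono_Hom assms(1)) auto
  then show "Poly_Mapping.single (sqfree_mono S) (a S) * G (card S) \<in> Deg_less n m k"
    by (cases "card S \<le> k") (simp_all add: assms(2))
qed

lemma binomial_layer_interpolation:
  fixes b :: "(nat \<times> nat) set \<Rightarrow> complex"
  assumes kr: "k \<le> r" and b: "\<And>S. k < card S \<Longrightarrow> b S = 0"
  obtains Q where "Q \<in> Deg_less n m k"
    "\<And>X. X \<subseteq> cells n m \<Longrightarrow> r \<le> card X \<Longrightarrow>
      (\<Sum>S\<in>Pow X. of_nat (card X - card S choose (k - card S)) * (b S / of_nat (r - card S choose (k - card S))))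
        = subset_sum b X + (of_nat (card X) - of_nat r) * eval Q (indicator X)"
proof -
  obtain G where G: "\<And>j. G j \<in> Deg_less n m (k - j)"
    "\<And>j X. j \<le> r \<Longrightarrow> X \<subseteq> cells n m \<Longrightarrow> j \<le> card X \<Longrightarrow>
      fact (k - j) * of_nat (card X - j choose (k - j))
        = fact (k - j) * of_nat (r - j choose (k - j)) + (of_nat (card X) - of_nat r) * eval (G j) (indicator X)"
    using binomial_interpolation by metis
  define coef where "coef S = b S / (fact (k - card S) * of_nat (r - card S choose (k - card S)))" for S
  define Q where "Q = (\<Sum>S\<in>Pow (cells n m). Poly_Mapping.single (sqfree_mono S) (coef S) * G (card S))"
  show thesis
  proof (rule that)
    show "Q \<in> Deg_less n m k"
      unfolding Q_def using G(1) by (rule sqfree_combination_Deg_less) (simp add: coef_def b)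
    fix X assume X: "X \<subseteq> cells n m" "r \<le> card X"
    let ?t = "card X"
    have "of_nat (?t - card S choose (k - card S)) * (b S / of_nat (r - card S choose (k - card S)))
        = b S + (of_nat ?t - of_nat r) * (coef S * eval (G (card S)) (indicator X))" if "S \<subseteq> X" for S
    proof (cases "card S \<le> k")
      case True
      have "(of_nat (r - card S choose (k - card S)) :: complex) \<noteq> 0"
        using kr True by simp
      moreover have "card S \<le> ?t"
        using that X finite_subset[OF X(1) finite_cells] by (simp add: card_mono)
      then have Ct: "of_nat (?t - card S choose (k - card S)) = of_nat (r - card S choose (k - card S))
          + (of_nat ?t - of_nat r) * eval (G (card S)) (indicator X) / fact (k - card S)"
        using G(2)[of "card S" X] True kr X by (simp add: field_simps)
      ultimately show ?thesis
        unfolding Ct coef_def by (simp add: field_simps)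
    qed (simp add: b coef_def)
    then show "(\<Sum>S\<in>Pow X. of_nat (?t - card S choose (k - card S)) * (b S / of_nat (r - card S choose (k - card S))))
        = subset_sum b X + (of_nat ?t - of_nat r) * eval Q (indicator X)"
      unfolding Q_def eval_sqfree_combination[OF X(1)]
      by (simp add: subset_sum_def sum.distrib sum_distrib_left)
  qed
qed

lemma rook_interpolation:
  assumes kr: "k \<le> r" and c: "\<And>S. card S \<noteq> k \<Longrightarrow> c S = 0" and B: "B \<in> Deg_less n m (Suc k)"
    and cB: "\<And>X. X \<in> rook_sets n m r \<Longrightarrow> subset_sum c X = eval B (indicator X)"
  obtains Q where "Q \<in> Deg_less n m k"
    "\<And>t X. r \<le> t \<Longrightarrow> X \<in> rook_sets n m t \<Longrightarrow>
      subset_sum c X = eval B (indicator X) + (of_nat t - of_nat r) * eval Q (indicator X)"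
proof -
  define b where "b = sqfree_coeff B"
  have b: "b S = 0" if "k < card S" for S
    using sqfree_coeff_eq_0[OF B that] by (simp add: b_def)
  have evB: "eval B (indicator X) = subset_sum b X" if "X \<in> rook_sets n m t" for X t
    unfolding b_def using rook_sets_finite[OF that] by (rule eval_indicator)
  obtain Q where Q: "Q \<in> Deg_less n m k"
    "\<And>X. X \<subseteq> cells n m \<Longrightarrow> r \<le> card X \<Longrightarrow>
      (\<Sum>S\<in>Pow X. of_nat (card X - card S choose (k - card S)) * (b S / of_nat (r - card S choose (k - card S))))
        = subset_sum b X + (of_nat (card X) - of_nat r) * eval Q (indicator X)"
    using binomial_layer_interpolation[where b = b and n = n and m = m, OF kr b] by blast
  show thesis
  proof (rule that[OF Q(1)])
    fix t X assume t: "r \<le> t" and X: "X \<in> rook_sets n m t"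
    have "subset_sum c X = (\<Sum>S\<in>Pow X.
        of_nat (t - card S choose (k - card S)) * (b S / of_nat (r - card S choose (k - card S))))"
      using kr c b cB evB t X by (intro rook_sets_subset_sum_extension) auto
    then show "subset_sum c X = eval B (indicator X) + (of_nat t - of_nat r) * eval Q (indicator X)"
      using Q(2)[OF rook_sets_subset_cells[OF X]] t evB[OF X] rook_sets_card[OF X] by simp
  qed
qed

section \<open>The action of \<open>S_n \<times> S_m\<close>\<close>

lemma act_mono_eq: "act_mono g h \<mu> = (\<Sum>v\<in>keys \<mu>. Poly_Mapping.single (map_prod g h v) (lookup \<mu> v))"
  unfolding act_mono_def by (intro sum.cong refl) (simp add: map_prod_def split_beta)

lemma lookup_act_mono:
  assumes "inj (map_prod g h)"
  shows "lookup (act_mono g h \<mu>) (map_prod g h v) = lookup \<mu> v"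
proof -
  have "lookup (act_mono g h \<mu>) (map_prod g h v) = (\<Sum>w\<in>keys \<mu>. if w = v then lookup \<mu> w else 0)"
    unfolding act_mono_eq lookup_sum lookup_single
    by (intro sum.cong refl) (simp add: when_def inj_eq[OF assms])
  also have "\<dots> = lookup \<mu> v"
    by (simp add: in_keys_iff)
  finally show ?thesis .
qed

lemma keys_act_mono: "keys (act_mono g h \<mu>) \<subseteq> map_prod g h ` keys \<mu>"
  unfolding act_mono_eq using keys_sum[of "\<lambda>v. Poly_Mapping.single (map_prod g h v) (lookup \<mu> v)" "keys \<mu>"]
  by (auto split: if_splits)

lemma mon_eval_act_mono:
  assumes "inj (map_prod g h)"
  shows "mon_eval A (act_mono g h \<mu>) = mon_eval (A \<circ> map_prod g h) \<mu>"
proof -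
  have "mon_eval A (act_mono g h \<mu>) = (\<Prod>w\<in>map_prod g h ` keys \<mu>. A w ^ lookup (act_mono g h \<mu>) w)"
    using keys_act_mono by (intro mon_eval_eq_prod_superset) auto
  also have "\<dots> = mon_eval (A \<circ> map_prod g h) \<mu>"
    using assms by (simp add: prod.reindex inj_on_subset mon_eval_def lookup_act_mono)
  finally show ?thesis .
qed

lemma mdeg_act_mono:
  assumes "inj (map_prod g h)"
  shows "mdeg (act_mono g h \<mu>) = mdeg \<mu>"
proof -
  have "mdeg (act_mono g h \<mu>) = (\<Sum>w\<in>map_prod g h ` keys \<mu>. lookup (act_mono g h \<mu>) w)"
    using keys_act_mono by (intro mdeg_eq_sum_superset) auto
  also have "\<dots> = mdeg \<mu>"
    using assms by (simp add: sum.reindex inj_on_subset mdeg_def lookup_act_mono)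
  finally show ?thesis .
qed

lemma eval_act: "inj (map_prod g h) \<Longrightarrow> eval (act g h p) A = eval p (A \<circ> map_prod g h)"
  unfolding act_def eval_sum eval_single
  by (simp add: mon_eval_act_mono eval_eq_sum_mon_eval mult.commute)

lemma inj_map_prod_permutes: "g permutes G \<Longrightarrow> h permutes H \<Longrightarrow> inj (map_prod g h)"
  using map_prod_inj_on[of g UNIV h UNIV] by (simp add: permutes_inj)

lemma act_Hom:
  assumes g: "g permutes {..<n}" and h: "h permutes {..<m}" and p: "p \<in> Hom n m k"
  shows "act g h p \<in> Hom n m k"
  unfolding act_def
proof (intro Hom_sum)
  fix \<mu> assume \<mu>: "\<mu> \<in> keys p"
  have "map_prod g h ` cells n m \<subseteq> cells n m"
    using permutes_in_image[OF g] permutes_in_image[OF h] by (auto simp: cells_def)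
  moreover have "keys \<mu> \<subseteq> cells n m"
    using p \<mu> by (auto simp: Hom_eq_supported supported_def cell_monos_def)
  ultimately have "act_mono g h \<mu> \<in> cell_monos n m"
    using keys_act_mono[of g h \<mu>] unfolding cell_monos_def by (blast dest: image_mono)
  moreover have "mdeg (act_mono g h \<mu>) = k"
    using p \<mu> by (simp add: mdeg_act_mono[OF inj_map_prod_permutes[OF g h]] Hom_def)
  ultimately show "Poly_Mapping.single (act_mono g h \<mu>) (lookup p \<mu>) \<in> Hom n m k"
    by (simp add: Hom_eq_supported supported_single)
qed

lemma eval_sumx_comp_map_prod:
  assumes "g permutes {..<n}" "h permutes {..<m}"
  shows "eval (sumx n m) (A \<circ> map_prod g h) = eval (sumx n m) A"
proof -
  have "bij_betw (map_prod g h) (cells n m) (cells n m)"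
    unfolding cells_def using assms by (intro bij_betw_map_prod) (auto intro: permutes_imp_bij)
  then show ?thesis
    by (simp add: eval_sumx sum.reindex_bij_betw)
qed

section \<open>Multiplication by \<open>sumx\<close>\<close>

lemma UZ_elim:
  assumes "A \<in> UZ n m r"
  obtains t X where "r \<le> t" "t \<le> min m n" "X \<in> rook_sets n m t" "A = indicator X"
  using assms by (auto simp: UZ_eq_indicator_image)

lemma indicator_in_UZ: "X \<in> rook_sets n m t \<Longrightarrow> r \<le> t \<Longrightarrow> t \<le> min m n \<Longrightarrow> indicator X \<in> UZ n m r"
  by (auto simp: UZ_eq_indicator_image)

lemma eval_sumx_rook_sets: "X \<in> rook_sets n m t \<Longrightarrow> eval (sumx n m) (indicator X) = of_nat t"
  by (simp add: eval_sumx_indicator rook_sets_subset_cells rook_sets_card)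

text \<open>On the stratum of rook placements of size \<open>t\<close>, multiplication by \<open>sumx\<close> is multiplication
  by \<open>t\<close>; for \<open>t > r\<close> the stratum lies in \<open>UZ_(r+1)\<close>, where \<open>f\<close> agrees with \<open>g\<close>.\<close>

lemma mult_sumx_in_grI_UZ:
  assumes f: "f \<in> Hom n m d" "f \<in> grI n m (UZ n m (r + 1))"
  shows "f * sumx n m \<in> grI n m (UZ n m r)"
proof -
  let ?s = "sumx n m"
  obtain g where g: "g \<in> Deg_less n m d" "\<forall>A\<in>UZ n m (r + 1). eval f A = eval g A"
    using f Hom_in_grI_iff by blast
  have "of_nat r * f + g * ?s - of_nat r * g \<in> Deg_less n m (d + 1)"
    using f(1) g(1) Hom_imp_Deg_less[OF sumx_Hom]
    by (intro Deg_less_add Deg_less_diff of_nat_mult_Deg_less Deg_less_mono[OF Deg_less_mult])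
      (auto intro: Hom_imp_Deg_less Deg_less_mono)
  moreover have "eval (f * ?s) A = eval (of_nat r * f + g * ?s - of_nat r * g) A" if "A \<in> UZ n m r" for A
  proof -
    obtain t X where tX: "r \<le> t" "t \<le> min m n" "X \<in> rook_sets n m t" "A = indicator X"
      using \<open>A \<in> UZ n m r\<close> by (rule UZ_elim)
    have "(of_nat t - of_nat r) * (eval f A - eval g A) = 0"
      using g(2) tX indicator_in_UZ[of X n m t "r + 1"] by (cases "t = r") auto
    then show ?thesis
      using tX eval_sumx_rook_sets[OF tX(3)] by (simp add: eval_mult eval_add eval_diff algebra_simps)
  qed
  ultimately show ?thesis
    using Hom_in_grI_iff[OF Hom_mult[OF f(1) sumx_Hom]] by blast
qed

lemma act_mult_sumx_diff_in_grI:
  assumes g: "g permutes {..<n}" and h: "h permutes {..<m}" and f: "f \<in> Hom n m d"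
  shows "act g h (f * sumx n m) - act g h f * sumx n m \<in> grI n m Z"
proof -
  have "act g h (f * sumx n m) - act g h f * sumx n m \<in> Hom n m (d + 1)"
    using g h f by (intro Hom_diff act_Hom Hom_mult sumx_Hom)
  moreover have "eval (act g h (f * sumx n m) - act g h f * sumx n m) A = eval 0 A" for A
    using g h by (simp add: eval_diff eval_act inj_map_prod_permutes eval_mult eval_sumx_comp_map_prod)
  ultimately show ?thesis
    using Hom_in_grI_iff Deg_less_zero by blast
qed

text \<open>Injectivity: if \<open>f sumx\<close> is congruent to a lower-degree \<open>g\<close> on \<open>UZ_r\<close>, then the square-free top
  part \<open>C\<close> of \<open>f\<close> satisfies \<open>t C = B\<close> on every stratum \<open>t \<ge> r\<close>, with \<open>B\<close> of degree \<open>\<le> d\<close>. Comparing with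
  the interpolation \<open>r C = B + (t - r) Q\<close> forces \<open>C = - Q\<close> for \<open>t > r\<close>.\<close>

lemma grI_UZ_Suc_if_mult_sumx_in_grI:
  assumes dr: "d < r" and rmn: "r < min m n"
    and f: "f \<in> Hom n m d" and fs: "f * sumx n m \<in> grI n m (UZ n m r)"
  shows "f \<in> grI n m (UZ n m (r + 1))"
proof -
  let ?s = "sumx n m"
  obtain g where g: "g \<in> Deg_less n m (d + 1)" "\<forall>A\<in>UZ n m r. eval (f * ?s) A = eval g A"
    using fs Hom_in_grI_iff[OF Hom_mult[OF f sumx_Hom]] by blast
  obtain c fl where c: "\<And>S. card S \<noteq> d \<Longrightarrow> c S = 0" and fl: "fl \<in> Deg_less n m d"
    and f_eq: "\<And>X. X \<subseteq> cells n m \<Longrightarrow> eval f (indicator X) = subset_sum c X + eval fl (indicator X)"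
    using Hom_sqfree_decomposition[OF f] by metis
  let ?B = "g - fl * ?s"
  have B: "?B \<in> Deg_less n m (Suc d)"
    using g(1) Deg_less_mult[OF fl, of ?s 1] Hom_imp_Deg_less[OF sumx_Hom] by (auto intro: Deg_less_diff)
  have tC: "of_nat t * subset_sum c X = eval ?B (indicator X)"
    if "r \<le> t" "t \<le> min m n" "X \<in> rook_sets n m t" for t X
  proof -
    have "eval g (indicator X) = eval (f * ?s) (indicator X)"
      using g(2) indicator_in_UZ[OF that(3,1,2)] by simp
    then show ?thesis
      using f_eq[OF rook_sets_subset_cells[OF that(3)]] eval_sumx_rook_sets[OF that(3)]
      by (simp add: eval_diff eval_mult algebra_simps)
  qed
  obtain Q where Q: "Q \<in> Deg_less n m d"
    "\<And>t X. r \<le> t \<Longrightarrow> X \<in> rook_sets n m t \<Longrightarrow>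
      subset_sum (\<lambda>S. of_nat r * c S) X = eval ?B (indicator X) + (of_nat t - of_nat r) * eval Q (indicator X)"
    using rook_interpolation[of d r "\<lambda>S. of_nat r * c S", OF _ _ B] dr rmn c tC
    by (auto simp: subset_sum_mult)
  have "eval f A = eval (fl - Q) A" if "A \<in> UZ n m (r + 1)" for A
  proof -
    obtain t X where tX: "r + 1 \<le> t" "t \<le> min m n" "X \<in> rook_sets n m t" "A = indicator X"
      using \<open>A \<in> UZ n m (r + 1)\<close> by (rule UZ_elim)
    have "(of_nat t - of_nat r) * (subset_sum c X + eval Q (indicator X)) = 0"
      using tC[of t X] Q(2)[of t X] tX by (simp add: subset_sum_mult algebra_simps)
    moreover have "(of_nat t - of_nat r :: complex) \<noteq> 0"
      using tX(1) by simp
    ultimately have "subset_sum c X = - eval Q (indicator X)"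
      by (simp add: eq_neg_iff_add_eq_0)
    then show ?thesis
      using tX f_eq[OF rook_sets_subset_cells[OF tX(3)]] by (simp add: eval_diff)
  qed
  moreover have "fl - Q \<in> Deg_less n m d"
    using fl Q(1) by (rule Deg_less_diff)
  ultimately show ?thesis
    using Hom_in_grI_iff[OF f] by blast
qed

lemma decomposition_if_in_grI_rookZ:
  assumes dr: "d < r" and rmn: "r < min m n"
    and f: "f \<in> Hom n m (d + 1)" and fI: "f \<in> grI n m (rookZ n m r)"
  shows "\<exists>p\<in>grI n m (UZ n m r). \<exists>q\<in>Hom n m d. f = p + q * sumx n m"
proof -
  let ?s = "sumx n m"
  obtain g where g: "g \<in> Deg_less n m (d + 1)" "\<forall>A\<in>rookZ n m r. eval f A = eval g A"
    using fI Hom_in_grI_iff[OF f] by blast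
  obtain c fl where c: "\<And>S. card S \<noteq> d + 1 \<Longrightarrow> c S = 0" and fl: "fl \<in> Deg_less n m (d + 1)"
    and f_eq: "\<And>X. X \<subseteq> cells n m \<Longrightarrow> eval f (indicator X) = subset_sum c X + eval fl (indicator X)"
    using Hom_sqfree_decomposition[OF f] by metis
  have B: "g - fl \<in> Deg_less n m (Suc (d + 1))"
    using g(1) fl by (intro Deg_less_diff) (auto intro: Deg_less_mono)
  have cB: "subset_sum c X = eval (g - fl) (indicator X)" if "X \<in> rook_sets n m r" for X
    using g(2) f_eq[OF rook_sets_subset_cells[OF that]] that
    by (simp add: rookZ_eq_indicator_image eval_diff)
  have "d + 1 \<le> r"
    using dr by simp
  then obtain Q where Q: "Q \<in> Deg_less n m (d + 1)"
    "\<And>t X. r \<le> t \<Longrightarrow> X \<in> rook_sets n m t \<Longrightarrow>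
      subset_sum c X = eval (g - fl) (indicator X) + (of_nat t - of_nat r) * eval Q (indicator X)"
    using rook_interpolation[OF _ c B cB] by auto
  define q where "q = hcomp d Q"
  have q: "q \<in> Hom n m d"
    unfolding q_def using Q(1) by (intro hcomp_in_Hom Deg_less_imp_PR)
  have Qq: "Q - q \<in> Deg_less n m d"
    unfolding q_def using Q(1) by (intro diff_hcomp_Deg_less) simp
  have "f - q * ?s \<in> grI n m (UZ n m r)"
  proof -
    have "g - of_nat r * Q + (Q - q) * ?s \<in> Deg_less n m (d + 1)"
      using g(1) Q(1) Deg_less_mult[OF Qq, of ?s 1] Hom_imp_Deg_less[OF sumx_Hom]
      by (intro Deg_less_add Deg_less_diff of_nat_mult_Deg_less) auto
    moreover have "eval (f - q * ?s) A = eval (g - of_nat r * Q + (Q - q) * ?s) A" if "A \<in> UZ n m r" for A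
    proof -
      obtain t X where tX: "r \<le> t" "t \<le> min m n" "X \<in> rook_sets n m t" "A = indicator X"
        using \<open>A \<in> UZ n m r\<close> by (rule UZ_elim)
      then show ?thesis
        using f_eq[OF rook_sets_subset_cells[OF tX(3)]] Q(2)[OF tX(1,3)] eval_sumx_rook_sets[OF tX(3)]
        by (simp add: eval_add eval_diff eval_mult algebra_simps)
    qed
    ultimately show ?thesis
      using Hom_in_grI_iff[OF Hom_diff[OF f Hom_mult[OF q sumx_Hom]]] by blast
  qed
  then show ?thesis
    using q by force
qed

lemma in_grI_rookZ_if_decomposition:
  assumes rmn: "r \<le> min m n" and f: "f \<in> Hom n m (d + 1)"
    and p: "p \<in> grI n m (UZ n m r)" and q: "q \<in> Hom n m d" and f_eq: "f = p + q * sumx n m"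
  shows "f \<in> grI n m (rookZ n m r)"
proof -
  have "p \<in> Hom n m (d + 1)"
    using f_eq Hom_diff[OF f Hom_mult[OF q sumx_Hom]] by simp
  then obtain g where g: "g \<in> Deg_less n m (d + 1)" "\<forall>A\<in>UZ n m r. eval p A = eval g A"
    using p Hom_in_grI_iff by blast
  have "of_nat r * q \<in> Deg_less n m (d + 1)"
    using Hom_imp_Deg_less[OF q] by (simp add: of_nat_mult_Deg_less)
  then have "g + of_nat r * q \<in> Deg_less n m (d + 1)"
    by (rule Deg_less_add[OF g(1)])
  moreover have "eval f A = eval (g + of_nat r * q) A" if "A \<in> rookZ n m r" for A
  proof -
    obtain X where X: "X \<in> rook_sets n m r" "A = indicator X"
      using \<open>A \<in> rookZ n m r\<close> by (auto simp: rookZ_eq_indicator_image)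
    then show ?thesis
      using g(2) indicator_in_UZ[OF X(1) order_refl rmn] eval_sumx_rook_sets[OF X(1)] f_eq
      by (simp add: eval_add eval_mult mult.commute)
  qed
  ultimately show ?thesis
    using Hom_in_grI_iff[OF f] by blast
qed

lemma Hom_in_grI_rookZ_iff:
  assumes "d < r" "r < min m n" "f \<in> Hom n m (d + 1)"
  shows "f \<in> grI n m (rookZ n m r) \<longleftrightarrow> (\<exists>p\<in>grI n m (UZ n m r). \<exists>q\<in>Hom n m d. f = p + q * sumx n m)"
  using decomposition_if_in_grI_rookZ[OF assms] in_grI_rookZ_if_decomposition[OF less_imp_le[OF assms(2)] assms(3)]
  by blast

theorem mainTheorem14:
  fixes n m r d :: nat
  assumes "d < r" and "r < min m n"
  shows
    \<comment> \<open>mult_(d,r) maps degree d to degree d+1 and is well defined on the quotients\<close>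
    "(\<forall>f\<in>Hom n m d. f * sumx n m \<in> Hom n m (d + 1))
   \<and> (\<forall>f\<in>Hom n m d. f \<in> grI n m (UZ n m (r + 1)) \<longrightarrow> f * sumx n m \<in> grI n m (UZ n m r))
    \<comment> \<open>it is S_n x S_m-equivariant (on the quotient)\<close>
   \<and> (\<forall>g h f. g permutes {..<n} \<and> h permutes {..<m} \<and> f \<in> Hom n m d \<longrightarrow>
        act g h (f * sumx n m) - act g h f * sumx n m \<in> grI n m (UZ n m r))
    \<comment> \<open>it is injective\<close>
   \<and> (\<forall>f\<in>Hom n m d. f * sumx n m \<in> grI n m (UZ n m r) \<longrightarrow> f \<in> grI n m (UZ n m (r + 1)))
    \<comment> \<open>cokernel isomorphism: a linear map on degree d+1 polynomials inducing an
        equivariant bijection R(UZ_r)_(d+1) / image \<rightarrow> R(Z_r)_(d+1)\<close>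
   \<and> (\<exists>\<phi>. (\<forall>f\<in>Hom n m (d + 1). \<phi> f \<in> Hom n m (d + 1))
        \<and> (\<forall>f\<in>Hom n m (d + 1). \<forall>f'\<in>Hom n m (d + 1). \<phi> (f + f') = \<phi> f + \<phi> f')
        \<and> (\<forall>c. \<forall>f\<in>Hom n m (d + 1). \<phi> (smult c f) = smult c (\<phi> f))
        \<and> (\<forall>f\<in>Hom n m (d + 1). \<phi> f \<in> grI n m (rookZ n m r) \<longleftrightarrow>
              (\<exists>p\<in>grI n m (UZ n m r). \<exists>q\<in>Hom n m d. f = p + q * sumx n m))
        \<and> (\<forall>g\<in>Hom n m (d + 1). \<exists>f\<in>Hom n m (d + 1). \<phi> f - g \<in> grI n m (rookZ n m r))
        \<and> (\<forall>g h f. g permutes {..<n} \<and> h permutes {..<m} \<and> f \<in> Hom n m (d + 1) \<longrightarrow>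
              \<phi> (act g h f) - act g h (\<phi> f) \<in> grI n m (rookZ n m r)))"
proof -
  text \<open>The cokernel isomorphism is induced by the identity on forms of degree \<open>d + 1\<close>; its content
    is that the kernel of \<open>R(UZ_r)_(d+1) \<rightarrow> R(Z_r)_(d+1)\<close> is exactly the image of multiplication.\<close>
  have "\<forall>f\<in>Hom n m (d + 1). f \<in> grI n m (rookZ n m r) \<longleftrightarrow>
      (\<exists>p\<in>grI n m (UZ n m r). \<exists>q\<in>Hom n m d. f = p + q * sumx n m)"
    using Hom_in_grI_rookZ_iff[OF assms] by blast
  moreover have "\<forall>g\<in>Hom n m (d + 1). \<exists>f\<in>Hom n m (d + 1). f - g \<in> grI n m (rookZ n m r)"
    using zero_in_grI by force
  ultimately show ?thesis
    using assms Hom_mult[OF _ sumx_Hom] mult_sumx_in_grI_UZ act_mult_sumx_diff_in_grI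
      grI_UZ_Suc_if_mult_sumx_in_grI zero_in_grI
    by (intro conjI exI[of _ "\<lambda>f. f"]) auto
qed

end
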